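(* Consider a random family with random number of children $N\ge 1$ and sexes $S_1,S_2,\dots\in\{\mathrm{M},\mathrm{F}\}$ of its children in birth order ($S_k$ defined on the event $N\ge k$). Assume: (i) (random coin toss) there is $p_M\in(0,1)$ such that $P(S_1=\mathrm{M})=p_M$ and, for every $k\ge 2$, $P(S_k=\mathrm{M}\mid N\ge k, S_1,\dots,S_{k-1})=p_M$; write $p_F=1-p_M$; (ii) the sex of the first child does not predict whether the family has a second child: $P(N\ge 2\mid S_1=\mathrm{M})=P(N\ge2\mid S_1=\mathrm{F})$; (iii) there are numbers $p_S>0$ and $p_D$ with $P(N\ge 3\mid N\ge 2, S_1=S_2=\mathrm{M})=P(N\ge 3\mid N\ge 2, S_1=S_2=\mathrm{F})=p_S$ and $P(N\ge 3\mid N\ge 2, S_1=\mathrm{M},S_2=\mathrm{F})=P(N\ge 3\mid N\ge 2, S_1=\mathrm{F},S_2=\mathrm{M})=p_D$. Then \[ P\left(\text{MMM or FFF}\mid N\geq 3\right)=\left(p_M^3+p_F^3\right)\frac{1}{2 p_Fp_M p_D/p_S +p_F^2+p_M^2}. \] If additionally $p_S>p_D$, then the inflation factor satisfies \[ \frac{1}{2 p_Fp_M p_D/p_S +p_F^2+p_M^2}>1. \]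
   Context: All births are singletons. "MMM" denotes the event $N\ge 3$ and $S_1=S_2=S_3=\mathrm{M}$; "FFF" denotes $N\ge3$ and $S_1=S_2=S_3=\mathrm{F}$. All conditioning events appearing are assumed to have positive probability. *)

theory Defs
  imports "HOL-Probability.Probability"
begin

datatype sex = Male | Female

definition cond_prob :: "'a measure \<Rightarrow> 'a set \<Rightarrow> 'a set \<Rightarrow> real" where
  "cond_prob M A B = measure M (A \<inter> B) / measure M B"

end

theory Submission
  imports Defs
begin

(* Write q = P(N >= 2 | S 1) which, by (ii), does not depend on the first sex. The coin toss gives
   P(N >= 2, S 1 = a, S 2 = b) = q p_a p_b, and then P(N >= 3, S 1 = a, S 2 = b) is this times pS
   or pD, while P(N >= 3, S 1 = S 2 = S 3 = a) = pS q p_a^3. Summing, P(N >= 3) = q pS D and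
   P(MMM or FFF, N >= 3) = q pS (pM^3 + pF^3), where D = 2 pF pM pD / pS + pF^2 + pM^2 is the
   denominator of the inflation factor; if pD < pS then D < (pF + pM)^2 = 1. *)

lemma cond_prob_nonneg: "0 \<le> cond_prob M A B"
  by (simp add: cond_prob_def)

lemma (in finite_measure) measure_Int_eq_cond_prob_mult:
  assumes "B \<in> sets M"
  shows "measure M (A \<inter> B) = cond_prob M A B * measure M B"
proof (cases "measure M B = 0")
  case True
  then have "measure M (A \<inter> B) \<le> 0"
    using finite_measure_mono[of "A \<inter> B" B] assms by auto
  then show ?thesis using True by (simp add: order_antisym)
qed (simp add: cond_prob_def)

lemma (in finite_measure) measure_split_sex:
  assumes "{\<omega>\<in>space M. P \<omega>} \<in> sets M" "{\<omega>\<in>space M. f \<omega> = Male} \<in> sets M"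
  shows "measure M {\<omega>\<in>space M. P \<omega>} =
         measure M {\<omega>\<in>space M. P \<omega> \<and> f \<omega> = Male} + measure M {\<omega>\<in>space M. P \<omega> \<and> f \<omega> = Female}"
proof -
  have "{\<omega>\<in>space M. P \<omega> \<and> f \<omega> = Male} = {\<omega>\<in>space M. P \<omega>} \<inter> {\<omega>\<in>space M. f \<omega> = Male}"
    and "{\<omega>\<in>space M. P \<omega> \<and> f \<omega> = Female} = {\<omega>\<in>space M. P \<omega>} - {\<omega>\<in>space M. f \<omega> = Male}"
    by (auto intro: sex.exhaust)
  then show ?thesis
    using finite_measure_Diff'[OF assms] by simp
qed

definition inflation_factor :: "real \<Rightarrow> real \<Rightarrow> real \<Rightarrow> real" where
  "inflation_factor pM pS pD = 1 / (2 * (1 - pM) * pM * pD / pS + (1 - pM) ^ 2 + pM ^ 2)"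

lemma inflation_factor_gt_one:
  fixes pM pS pD :: real
  assumes "0 < pM" "pM < 1" "0 \<le> pD" "pD < pS"
  shows "inflation_factor pM pS pD > 1"
proof -
  have "2 * (1 - pM) * pM * (pD / pS) < 2 * (1 - pM) * pM * 1"
    using assms by (intro mult_strict_left_mono) auto
  moreover have "(1 - pM) ^ 2 + pM ^ 2 + 2 * (1 - pM) * pM = 1"
    by (simp add: power2_eq_square algebra_simps)
  ultimately have "2 * (1 - pM) * pM * pD / pS + (1 - pM) ^ 2 + pM ^ 2 < 1"
    by simp
  moreover have "0 < 2 * (1 - pM) * pM * pD / pS + (1 - pM) ^ 2 + pM ^ 2"
    using assms by (intro add_nonneg_pos) auto
  ultimately show ?thesis
    unfolding inflation_factor_def by simp
qed

lemma mult_inflation_factor_eq: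
  fixes pM pS pD c :: real
  assumes "pS \<noteq> 0"
  shows "pS * c / (pS * pM ^ 2 + 2 * pD * pM * (1 - pM) + pS * (1 - pM) ^ 2)
           = c * inflation_factor pM pS pD"
proof -
  have "pS * pM ^ 2 + 2 * pD * pM * (1 - pM) + pS * (1 - pM) ^ 2
          = pS * (2 * (1 - pM) * pM * pD / pS + (1 - pM) ^ 2 + pM ^ 2)"
    using assms by (simp add: field_simps)
  then show ?thesis
    using assms unfolding inflation_factor_def by simp
qed

locale family_sexes = prob_space M
  for M :: "'a measure" and N :: "'a \<Rightarrow> nat" and S :: "nat \<Rightarrow> 'a \<Rightarrow> sex"
    and pM pS pD :: real +
  assumes N_meas[measurable]: "N \<in> measurable M (count_space UNIV)"
    and S_meas[measurable]: "\<And>k. S k \<in> measurable M (count_space UNIV)"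
    and coin1: "measure M {\<omega>\<in>space M. S 1 \<omega> = Male} = pM"
    and coin: "\<And>k s. k \<ge> 2 \<Longrightarrow>
        measure M {\<omega>\<in>space M. N \<omega> \<ge> k \<and> (\<forall>i\<in>{1..<k}. S i \<omega> = s i)} > 0 \<Longrightarrow>
        cond_prob M {\<omega>\<in>space M. S k \<omega> = Male}
          {\<omega>\<in>space M. N \<omega> \<ge> k \<and> (\<forall>i\<in>{1..<k}. S i \<omega> = s i)} = pM"
    and second: "cond_prob M {\<omega>\<in>space M. N \<omega> \<ge> 2} {\<omega>\<in>space M. S 1 \<omega> = Male}
               = cond_prob M {\<omega>\<in>space M. N \<omega> \<ge> 2} {\<omega>\<in>space M. S 1 \<omega> = Female}"
    and MM: "cond_prob M {\<omega>\<in>space M. N \<omega> \<ge> 3}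
               {\<omega>\<in>space M. N \<omega> \<ge> 2 \<and> S 1 \<omega> = Male \<and> S 2 \<omega> = Male} = pS"
    and FF: "cond_prob M {\<omega>\<in>space M. N \<omega> \<ge> 3}
               {\<omega>\<in>space M. N \<omega> \<ge> 2 \<and> S 1 \<omega> = Female \<and> S 2 \<omega> = Female} = pS"
    and MF: "cond_prob M {\<omega>\<in>space M. N \<omega> \<ge> 3}
               {\<omega>\<in>space M. N \<omega> \<ge> 2 \<and> S 1 \<omega> = Male \<and> S 2 \<omega> = Female} = pD"
    and FM: "cond_prob M {\<omega>\<in>space M. N \<omega> \<ge> 3}
               {\<omega>\<in>space M. N \<omega> \<ge> 2 \<and> S 1 \<omega> = Female \<and> S 2 \<omega> = Male} = pD"
begin

definition sex_prob :: "sex \<Rightarrow> real" where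
  "sex_prob a = (case a of Male \<Rightarrow> pM | Female \<Rightarrow> 1 - pM)"

definition continuation_prob :: "sex \<Rightarrow> sex \<Rightarrow> real" where
  "continuation_prob a b = (if a = b then pS else pD)"

definition second_child_prob :: real where
  "second_child_prob = cond_prob M {\<omega>\<in>space M. N \<omega> \<ge> 2} {\<omega>\<in>space M. S 1 \<omega> = Male}"

lemma pD_nonneg: "0 \<le> pD"
  using cond_prob_nonneg unfolding MF[symmetric] .

lemma measure_first_child: "measure M {\<omega>\<in>space M. S 1 \<omega> = a} = sex_prob a"
proof -
  have "measure M {\<omega>\<in>space M. True}
          = measure M {\<omega>\<in>space M. True \<and> S 1 \<omega> = Male}
          + measure M {\<omega>\<in>space M. True \<and> S 1 \<omega> = Female}"
    by (rule measure_split_sex) measurable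
  then show ?thesis
    using prob_space coin1 by (cases a) (simp_all add: sex_prob_def)
qed

lemma measure_next_child:
  fixes k :: nat and s :: "nat \<Rightarrow> sex"
  assumes "k \<ge> 2"
  defines "B \<equiv> {\<omega>\<in>space M. N \<omega> \<ge> k \<and> (\<forall>i\<in>{1..<k}. S i \<omega> = s i)}"
  shows "measure M {\<omega>\<in>space M. N \<omega> \<ge> k \<and> (\<forall>i\<in>{1..<k}. S i \<omega> = s i) \<and> S k \<omega> = b}
           = sex_prob b * measure M B"
proof -
  have B_sets: "B \<in> sets M"
    unfolding B_def by measurable
  have Int_B: "{\<omega>\<in>space M. S k \<omega> = Male} \<inter> B
                 = {\<omega>\<in>space M. N \<omega> \<ge> k \<and> (\<forall>i\<in>{1..<k}. S i \<omega> = s i) \<and> S k \<omega> = Male}"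
    unfolding B_def by auto
  have "measure M ({\<omega>\<in>space M. S k \<omega> = Male} \<inter> B) = pM * measure M B"
  proof (cases "measure M B > 0")
    case True
    then have "cond_prob M {\<omega>\<in>space M. S k \<omega> = Male} B = pM"
      using coin[OF assms(1)] unfolding B_def by blast
    then show ?thesis
      using measure_Int_eq_cond_prob_mult[OF B_sets] by simp
  next
    case False
    then have "measure M B = 0"
      using measure_nonneg[of M B] by simp
    then show ?thesis
      using measure_Int_eq_cond_prob_mult[OF B_sets] by simp
  qed
  then have male: "measure M {\<omega>\<in>space M. N \<omega> \<ge> k \<and> (\<forall>i\<in>{1..<k}. S i \<omega> = s i) \<and> S k \<omega> = Male}
                     = pM * measure M B"
    unfolding Int_B .
  have "measure M B
          = measure M {\<omega>\<in>space M. N \<omega> \<ge> k \<and> (\<forall>i\<in>{1..<k}. S i \<omega> = s i) \<and> S k \<omega> = Male}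
          + measure M {\<omega>\<in>space M. N \<omega> \<ge> k \<and> (\<forall>i\<in>{1..<k}. S i \<omega> = s i) \<and> S k \<omega> = Female}"
    unfolding B_def
    by (rule measure_split_sex[of "\<lambda>\<omega>. N \<omega> \<ge> k \<and> (\<forall>i\<in>{1..<k}. S i \<omega> = s i)" "S k",
          simplified conj_assoc]) measurable
  then show ?thesis
    using male by (cases b) (auto simp: sex_prob_def algebra_simps)
qed

lemma measure_second_child:
  "measure M {\<omega>\<in>space M. N \<omega> \<ge> 2 \<and> S 1 \<omega> = a} = second_child_prob * sex_prob a"
proof -
  have "measure M {\<omega>\<in>space M. N \<omega> \<ge> 2 \<and> S 1 \<omega> = a}
          = measure M ({\<omega>\<in>space M. N \<omega> \<ge> 2} \<inter> {\<omega>\<in>space M. S 1 \<omega> = a})"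
    by (rule arg_cong[where f = "measure M"]) auto
  also have "\<dots> = cond_prob M {\<omega>\<in>space M. N \<omega> \<ge> 2} {\<omega>\<in>space M. S 1 \<omega> = a}
                    * measure M {\<omega>\<in>space M. S 1 \<omega> = a}"
    by (rule measure_Int_eq_cond_prob_mult) measurable
  also have "\<dots> = second_child_prob * sex_prob a"
    using second measure_first_child[of a] by (cases a) (simp_all add: second_child_prob_def)
  finally show ?thesis .
qed

lemma measure_two_children:
  "measure M {\<omega>\<in>space M. N \<omega> \<ge> 2 \<and> S 1 \<omega> = a \<and> S 2 \<omega> = b}
     = second_child_prob * sex_prob a * sex_prob b"
proof -
  have "{1..<2::nat} = {1}"
    by auto
  then show ?thesis
    using measure_next_child[of 2 "\<lambda>_. a" b] measure_second_child[of a] by simp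
qed

lemma measure_three_children_prefix:
  "measure M {\<omega>\<in>space M. N \<omega> \<ge> 3 \<and> S 1 \<omega> = a \<and> S 2 \<omega> = b}
     = continuation_prob a b * second_child_prob * sex_prob a * sex_prob b"
proof -
  have "measure M {\<omega>\<in>space M. N \<omega> \<ge> 3 \<and> S 1 \<omega> = a \<and> S 2 \<omega> = b}
          = measure M ({\<omega>\<in>space M. N \<omega> \<ge> 3}
                       \<inter> {\<omega>\<in>space M. N \<omega> \<ge> 2 \<and> S 1 \<omega> = a \<and> S 2 \<omega> = b})"
    by (rule arg_cong[where f = "measure M"]) auto
  also have "\<dots> = cond_prob M {\<omega>\<in>space M. N \<omega> \<ge> 3}
                      {\<omega>\<in>space M. N \<omega> \<ge> 2 \<and> S 1 \<omega> = a \<and> S 2 \<omega> = b}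
                    * measure M {\<omega>\<in>space M. N \<omega> \<ge> 2 \<and> S 1 \<omega> = a \<and> S 2 \<omega> = b}"
    by (rule measure_Int_eq_cond_prob_mult) measurable
  also have "\<dots> = continuation_prob a b * second_child_prob * sex_prob a * sex_prob b"
    using MM FF MF FM measure_two_children[of a b]
    by (cases a; cases b) (simp_all add: continuation_prob_def mult.assoc)
  finally show ?thesis .
qed

lemma measure_at_least_three:
  "measure M {\<omega>\<in>space M. N \<omega> \<ge> 3}
     = second_child_prob * (pS * pM ^ 2 + 2 * pD * pM * (1 - pM) + pS * (1 - pM) ^ 2)"
proof -
  have "measure M {\<omega>\<in>space M. N \<omega> \<ge> 3}
          = measure M {\<omega>\<in>space M. N \<omega> \<ge> 3 \<and> S 1 \<omega> = Male}
          + measure M {\<omega>\<in>space M. N \<omega> \<ge> 3 \<and> S 1 \<omega> = Female}"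
    by (rule measure_split_sex) measurable
  moreover have "measure M {\<omega>\<in>space M. N \<omega> \<ge> 3 \<and> S 1 \<omega> = a}
                   = measure M {\<omega>\<in>space M. N \<omega> \<ge> 3 \<and> S 1 \<omega> = a \<and> S 2 \<omega> = Male}
                   + measure M {\<omega>\<in>space M. N \<omega> \<ge> 3 \<and> S 1 \<omega> = a \<and> S 2 \<omega> = Female}" for a
    by (rule measure_split_sex[of "\<lambda>\<omega>. N \<omega> \<ge> 3 \<and> S 1 \<omega> = a" "S 2", simplified conj_assoc])
      measurable
  ultimately show ?thesis
    using measure_three_children_prefix[of Male Male] measure_three_children_prefix[of Male Female]
      measure_three_children_prefix[of Female Male] measure_three_children_prefix[of Female Female]
    by (simp add: sex_prob_def continuation_prob_def power2_eq_square algebra_simps)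
qed

lemma measure_same_sex_triple:
  "measure M {\<omega>\<in>space M. N \<omega> \<ge> 3 \<and> S 1 \<omega> = a \<and> S 2 \<omega> = a \<and> S 3 \<omega> = a}
     = pS * second_child_prob * sex_prob a ^ 3"
proof -
  have "{1..<3::nat} = {1, 2}"
    by auto
  then show ?thesis
    using measure_next_child[of 3 "\<lambda>_. a" a] measure_three_children_prefix[of a a]
    by (simp add: continuation_prob_def power3_eq_cube conj_assoc)
qed

lemma measure_same_sex_triples:
  "measure M {\<omega>\<in>space M. N \<omega> \<ge> 3 \<and>
                 ((S 1 \<omega> = Male \<and> S 2 \<omega> = Male \<and> S 3 \<omega> = Male) \<or>
                  (S 1 \<omega> = Female \<and> S 2 \<omega> = Female \<and> S 3 \<omega> = Female))}
     = second_child_prob * (pS * (pM ^ 3 + (1 - pM) ^ 3))"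
proof -
  have "{\<omega>\<in>space M. N \<omega> \<ge> 3 \<and>
           ((S 1 \<omega> = Male \<and> S 2 \<omega> = Male \<and> S 3 \<omega> = Male) \<or>
            (S 1 \<omega> = Female \<and> S 2 \<omega> = Female \<and> S 3 \<omega> = Female))}
          = {\<omega>\<in>space M. N \<omega> \<ge> 3 \<and> S 1 \<omega> = Male \<and> S 2 \<omega> = Male \<and> S 3 \<omega> = Male}
          \<union> {\<omega>\<in>space M. N \<omega> \<ge> 3 \<and> S 1 \<omega> = Female \<and> S 2 \<omega> = Female \<and> S 3 \<omega> = Female}"
    by auto
  moreover have "measure M
      ({\<omega>\<in>space M. N \<omega> \<ge> 3 \<and> S 1 \<omega> = Male \<and> S 2 \<omega> = Male \<and> S 3 \<omega> = Male}
       \<union> {\<omega>\<in>space M. N \<omega> \<ge> 3 \<and> S 1 \<omega> = Female \<and> S 2 \<omega> = Female \<and> S 3 \<omega> = Female})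
      = measure M {\<omega>\<in>space M. N \<omega> \<ge> 3 \<and> S 1 \<omega> = Male \<and> S 2 \<omega> = Male \<and> S 3 \<omega> = Male}
      + measure M {\<omega>\<in>space M. N \<omega> \<ge> 3 \<and> S 1 \<omega> = Female \<and> S 2 \<omega> = Female \<and> S 3 \<omega> = Female}"
    by (rule finite_measure_Union) (measurable, auto)
  ultimately show ?thesis
    using measure_same_sex_triple[of Male] measure_same_sex_triple[of Female]
    by (simp add: sex_prob_def algebra_simps)
qed

end

theorem corollary1:
  fixes M :: "'a measure" and N :: "'a \<Rightarrow> nat" and S :: "nat \<Rightarrow> 'a \<Rightarrow> sex"
    and pM pS pD :: real
  assumes "prob_space M"
    and N_meas: "N \<in> measurable M (count_space UNIV)"
    and S_meas: "\<And>k. S k \<in> measurable M (count_space UNIV)"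
    and N_pos: "\<forall>\<omega>\<in>space M. N \<omega> \<ge> 1"
    and pM: "0 < pM" "pM < 1"
    and coin1: "measure M {\<omega>\<in>space M. S 1 \<omega> = Male} = pM"
    and coin: "\<And>k s. k \<ge> 2 \<Longrightarrow>
        measure M {\<omega>\<in>space M. N \<omega> \<ge> k \<and> (\<forall>i\<in>{1..<k}. S i \<omega> = s i)} > 0 \<Longrightarrow>
        cond_prob M {\<omega>\<in>space M. S k \<omega> = Male}
          {\<omega>\<in>space M. N \<omega> \<ge> k \<and> (\<forall>i\<in>{1..<k}. S i \<omega> = s i)} = pM"
    and second: "cond_prob M {\<omega>\<in>space M. N \<omega> \<ge> 2} {\<omega>\<in>space M. S 1 \<omega> = Male}
               = cond_prob M {\<omega>\<in>space M. N \<omega> \<ge> 2} {\<omega>\<in>space M. S 1 \<omega> = Female}"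
    and pos_MM: "measure M {\<omega>\<in>space M. N \<omega> \<ge> 2 \<and> S 1 \<omega> = Male \<and> S 2 \<omega> = Male} > 0"
    and pos_FF: "measure M {\<omega>\<in>space M. N \<omega> \<ge> 2 \<and> S 1 \<omega> = Female \<and> S 2 \<omega> = Female} > 0"
    and pos_MF: "measure M {\<omega>\<in>space M. N \<omega> \<ge> 2 \<and> S 1 \<omega> = Male \<and> S 2 \<omega> = Female} > 0"
    and pos_FM: "measure M {\<omega>\<in>space M. N \<omega> \<ge> 2 \<and> S 1 \<omega> = Female \<and> S 2 \<omega> = Male} > 0"
    and pos_3: "measure M {\<omega>\<in>space M. N \<omega> \<ge> 3} > 0"
    and pS_pos: "pS > 0"
    and MM: "cond_prob M {\<omega>\<in>space M. N \<omega> \<ge> 3}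
               {\<omega>\<in>space M. N \<omega> \<ge> 2 \<and> S 1 \<omega> = Male \<and> S 2 \<omega> = Male} = pS"
    and FF: "cond_prob M {\<omega>\<in>space M. N \<omega> \<ge> 3}
               {\<omega>\<in>space M. N \<omega> \<ge> 2 \<and> S 1 \<omega> = Female \<and> S 2 \<omega> = Female} = pS"
    and MF: "cond_prob M {\<omega>\<in>space M. N \<omega> \<ge> 3}
               {\<omega>\<in>space M. N \<omega> \<ge> 2 \<and> S 1 \<omega> = Male \<and> S 2 \<omega> = Female} = pD"
    and FM: "cond_prob M {\<omega>\<in>space M. N \<omega> \<ge> 3}
               {\<omega>\<in>space M. N \<omega> \<ge> 2 \<and> S 1 \<omega> = Female \<and> S 2 \<omega> = Male} = pD"
  shows "cond_prob M
           {\<omega>\<in>space M. N \<omega> \<ge> 3 \<and>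
              ((S 1 \<omega> = Male \<and> S 2 \<omega> = Male \<and> S 3 \<omega> = Male) \<or>
               (S 1 \<omega> = Female \<and> S 2 \<omega> = Female \<and> S 3 \<omega> = Female))}
           {\<omega>\<in>space M. N \<omega> \<ge> 3}
         = (pM ^ 3 + (1 - pM) ^ 3) *
           (1 / (2 * (1 - pM) * pM * pD / pS + (1 - pM) ^ 2 + pM ^ 2))
         \<and> (pS > pD \<longrightarrow> 1 / (2 * (1 - pM) * pM * pD / pS + (1 - pM) ^ 2 + pM ^ 2) > 1)"
proof -
  interpret family_sexes M N S pM pS pD
    by (intro family_sexes.intro family_sexes_axioms.intro) (fact assms)+
  let ?E = "{\<omega>\<in>space M. N \<omega> \<ge> 3 \<and>
              ((S 1 \<omega> = Male \<and> S 2 \<omega> = Male \<and> S 3 \<omega> = Male) \<or>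
               (S 1 \<omega> = Female \<and> S 2 \<omega> = Female \<and> S 3 \<omega> = Female))}"
  let ?q = second_child_prob
  have "?q \<noteq> 0"
    using pos_3 measure_at_least_three by auto
  have E_Int: "?E \<inter> {\<omega>\<in>space M. N \<omega> \<ge> 3} = ?E"
    by auto
  have "cond_prob M ?E {\<omega>\<in>space M. N \<omega> \<ge> 3}
      = ?q * (pS * (pM ^ 3 + (1 - pM) ^ 3))
        / (?q * (pS * pM ^ 2 + 2 * pD * pM * (1 - pM) + pS * (1 - pM) ^ 2))"
    unfolding cond_prob_def E_Int measure_at_least_three measure_same_sex_triples ..
  also have "\<dots> = (pM ^ 3 + (1 - pM) ^ 3) * inflation_factor pM pS pD"
    using \<open>?q \<noteq> 0\<close> pS_pos mult_inflation_factor_eq by simp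
  finally show ?thesis
    using inflation_factor_gt_one pM pD_nonneg unfolding inflation_factor_def by auto
qed

end
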